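(* Let $P$ be the face poset of a convex polytope $\mathcal P$ and let $Pr(P)$ be the face poset of the prism over $\mathcal P$. Then $$\mathcal{M}_{Pr(P)}(z)=(3-2z)\bigl(\mathcal{M}_P(z)-g^P_{-1}(z)\bigr)+g^{Pr(P)}_{-1}(z).$$
   Context: The face poset of a convex polytope with vertex set $V$ is the set of vertex sets of its faces (including the whole polytope) together with $\emptyset$, ordered by inclusion, ranked by dimension ($|\emptyset|=-1$). For a $d$-dimensional polytope $\mathcal P$, the prism over $\mathcal P$ is the convex hull of two copies of $\mathcal P$ placed in the hyperplanes $x=0$ and $x=1$ of $\mathbb{R}^{d+1}$; its faces are the two copies of each face of $\mathcal P$ and, for each face $F$ of $\mathcal P$, the face of dimension $\dim F+1$ joining the two copies of $F$. The Möbius function $\mu$ is $\mu[p,p]=1$, $\mu[p,q]=-\sum_{p\le s<q}\mu[p,s]$ for $p<q$, $0$ if $p\not\le q$; $\mu_z[p,q]=\mu[p,q]z^{|q|-|p|}$; the Möbius polynomial is $\mathcal{M}_P(z)=\sum_{p\le q\in P}\mu_z[p,q]$; the bottom polynomial is $g^P_{-1}(z)=\sum_{p\le q,\ |p|\le -1\le |q|}\mu_z[p,q]$. *)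

theory Defs
  imports "HOL-Analysis.Analysis" "HOL-Computational_Algebra.Polynomial"
begin

function mobius :: "'a set set \<Rightarrow> 'a set \<Rightarrow> 'a set \<Rightarrow> int" where
  "mobius P p q =
     (if p = q then 1
      else if finite P \<and> p \<subset> q
      then - (\<Sum>s\<in>{s\<in>P. p \<subseteq> s \<and> s \<subset> q}. mobius P p s)
      else 0)"
  by pat_completeness auto
termination
proof (relation "Wellfounded.measure (\<lambda>(P, p, q). card {s\<in>P. s \<subset> q})")
  show "wf (Wellfounded.measure (\<lambda>(P, p, q). card {s\<in>P. s \<subset> q}))" by simp
next
  fix P :: "'a set set" and p q s
  assume h: "p \<noteq> q" "finite P \<and> p \<subset> q" "s \<in> {s\<in>P. p \<subseteq> s \<and> s \<subset> q}"
  have "{t\<in>P. t \<subset> s} \<subset> {t\<in>P. t \<subset> q}" using h by auto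
  then have "card {t\<in>P. t \<subset> s} < card {t\<in>P. t \<subset> q}"
    using h by (intro psubset_card_mono) auto
  then show "((P, p, s), P, p, q) \<in> Wellfounded.measure (\<lambda>(P, p, q). card {s\<in>P. s \<subset> q})" by simp
qed

declare mobius.simps[simp del]

definition mobius_poly :: "'a set set \<Rightarrow> ('a set \<Rightarrow> int) \<Rightarrow> int poly" where
  "mobius_poly P rk =
     (\<Sum>(p, q)\<in>{(p, q). p \<in> P \<and> q \<in> P \<and> p \<subseteq> q}. monom (mobius P p q) (nat (rk q - rk p)))"

definition bottom_poly :: "'a set set \<Rightarrow> ('a set \<Rightarrow> int) \<Rightarrow> int poly" where
  "bottom_poly P rk =
     (\<Sum>(p, q)\<in>{(p, q). p \<in> P \<and> q \<in> P \<and> p \<subseteq> q \<and> rk p \<le> -1 \<and> -1 \<le> rk q}.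
        monom (mobius P p q) (nat (rk q - rk p)))"

text \<open>Face poset: vertex sets of all faces (the empty face contributes the empty set,
  the polytope itself is a face). Ranked by dimension: rank of a vertex set = aff_dim.\<close>
definition face_poset :: "'a::euclidean_space set \<Rightarrow> 'a set set" where
  "face_poset K = {{v. v extreme_point_of F} | F. F face_of K}"

definition face_rank :: "'a::euclidean_space set \<Rightarrow> int" where
  "face_rank S = aff_dim S"

definition prism :: "'a::euclidean_space set \<Rightarrow> ('a \<times> real) set" where
  "prism K = convex hull ((\<lambda>x. (x, 0)) ` K \<union> (\<lambda>x. (x, 1)) ` K)"

end

theory Submission
  imports Defs
begin

(* The prism over a polytope K is the product K \<times> [0,1], and every face of a
   product of polytopes is a product of faces.  Hence the face poset of the prism is
   the "product poset" {V \<times> W} of the face poset P of K with the face poset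
   {{}, {0}, {1}, {0,1}} of the unit segment; the only collapse is V \<times> {} = {} \<times> W = {}.

   Splitting the Moebius polynomial into the bottom polynomial (pairs starting at
   the empty face) and the remaining part N (pairs p \<le> q with p \<noteq> {}), the theorem
   reduces to the multiplicativity N(prism) = N(P) * N(segment) together with the
   computation N(segment) = 3 - 2z.  Multiplicativity rests on two facts about
   nonempty products: the Moebius function is multiplicative, which follows from the
   characterisation of mu[p,-] as the unique function with value 1 at p whose sums
   over all intervals [p,q] with p < q vanish; and the rank (affine dimension) is
   additive. *)

lemma mobius_refl [simp]: "mobius P p p = 1"
  by (subst mobius.simps) simp

lemma mobius_interval_sum:
  assumes "finite P" "q \<in> P" "p \<subseteq> q"
  shows "(\<Sum>s\<in>{s\<in>P. p \<subseteq> s \<and> s \<subseteq> q}. mobius P p s) = (if p = q then 1 else 0)"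
proof (cases "p = q")
  case True
  then have "{s\<in>P. p \<subseteq> s \<and> s \<subseteq> q} = {p}" using assms by auto
  then show ?thesis using True by simp
next
  case False
  let ?I = "{s\<in>P. p \<subseteq> s \<and> s \<subset> q}"
  have "{s\<in>P. p \<subseteq> s \<and> s \<subseteq> q} = insert q ?I" using assms by auto
  moreover have "mobius P p q = - (\<Sum>s\<in>?I. mobius P p s)"
    using False assms by (subst mobius.simps) auto
  ultimately show ?thesis using False assms(1) by simp
qed

lemma mobius_unique:
  assumes fin: "finite P" and p: "g p = 1"
    and zero: "\<And>q. q \<in> P \<Longrightarrow> p \<subset> q \<Longrightarrow> (\<Sum>s\<in>{s\<in>P. p \<subseteq> s \<and> s \<subseteq> q}. g s) = 0"
  shows "q \<in> P \<Longrightarrow> p \<subseteq> q \<Longrightarrow> mobius P p q = g q"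
proof (induction "card {s\<in>P. s \<subset> q}" arbitrary: q rule: less_induct)
  case less
  show ?case
  proof (cases "p = q")
    case True
    then show ?thesis using p by simp
  next
    case False
    let ?I = "{s\<in>P. p \<subseteq> s \<and> s \<subset> q}"
    have IH: "mobius P p s = g s" if s: "s \<in> ?I" for s
    proof (rule less.hyps)
      have "{t\<in>P. t \<subset> s} \<subset> {t\<in>P. t \<subset> q}" using s by auto
      then show "card {t\<in>P. t \<subset> s} < card {t\<in>P. t \<subset> q}"
        using fin by (intro psubset_card_mono) auto
    qed (use s in auto)
    have "mobius P p q = - (\<Sum>s\<in>?I. mobius P p s)"
      using False less.prems fin by (subst mobius.simps) auto
    also have "\<dots> = - (\<Sum>s\<in>?I. g s)" using IH by simp
    also have "\<dots> = g q"
    proof -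
      have "{s\<in>P. p \<subseteq> s \<and> s \<subseteq> q} = insert q ?I" using less.prems by auto
      then have "g q + (\<Sum>s\<in>?I. g s) = 0"
        using zero[of q] less.prems False fin by simp
      then show ?thesis by simp
    qed
    finally show ?thesis .
  qed
qed

lemma mobius_cover:
  assumes "finite P" "q \<in> P" "p \<noteq> q" "{s\<in>P. p \<subseteq> s \<and> s \<subseteq> q} = {p, q}"
  shows "mobius P p q = -1"
proof -
  have "p \<subseteq> q" using assms(4) by blast
  then have "(\<Sum>s\<in>{s\<in>P. p \<subseteq> s \<and> s \<subseteq> q}. mobius P p s) = 0"
    using mobius_interval_sum[OF assms(1,2)] assms(3) by simp
  then have "(\<Sum>s\<in>{p, q}. mobius P p s) = 0" unfolding assms(4) .
  then show ?thesis using assms(3) by simp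
qed

definition times_poset :: "'a set set \<Rightarrow> 'b set set \<Rightarrow> ('a \<times> 'b) set set" where
  "times_poset P B = (\<lambda>(V, W). V \<times> W) ` (P \<times> B)"

lemma finite_times_poset: "finite P \<Longrightarrow> finite B \<Longrightarrow> finite (times_poset P B)"
  unfolding times_poset_def by simp

lemma times_poset_interval:
  assumes "V \<noteq> {}" "W \<noteq> {}"
  shows "{s\<in>times_poset P B. V \<times> W \<subseteq> s \<and> s \<subseteq> V' \<times> W'} =
           (\<lambda>(a, b). a \<times> b) ` ({a\<in>P. V \<subseteq> a \<and> a \<subseteq> V'} \<times> {b\<in>B. W \<subseteq> b \<and> b \<subseteq> W'})"
proof
  show "{s\<in>times_poset P B. V \<times> W \<subseteq> s \<and> s \<subseteq> V' \<times> W'} \<subseteq>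
          (\<lambda>(a, b). a \<times> b) ` ({a\<in>P. V \<subseteq> a \<and> a \<subseteq> V'} \<times> {b\<in>B. W \<subseteq> b \<and> b \<subseteq> W'})"
  proof clarify
    fix s assume s: "s \<in> times_poset P B" "V \<times> W \<subseteq> s" "s \<subseteq> V' \<times> W'"
    then obtain a b where ab: "a \<in> P" "b \<in> B" "s = a \<times> b" unfolding times_poset_def by auto
    then have "V \<subseteq> a" "W \<subseteq> b" "a \<subseteq> V'" "b \<subseteq> W'"
      using s assms by (auto simp: times_subset_iff)
    then show "s \<in> (\<lambda>(a, b). a \<times> b) ` ({a\<in>P. V \<subseteq> a \<and> a \<subseteq> V'} \<times> {b\<in>B. W \<subseteq> b \<and> b \<subseteq> W'})"
      using ab by auto
  qed
qed (auto simp: times_poset_def)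

lemma inj_on_times_nonempty:
  "inj_on (\<lambda>(a, b). a \<times> b) {(a, b). a \<noteq> {} \<and> b \<noteq> {}}"
  by (auto intro!: inj_onI simp: times_eq_iff)

(* Multiplicativity of the Moebius function on nonempty products: the product of the
   two factor functions satisfies the characterisation of mobius_unique. *)
lemma mobius_times_poset:
  fixes P :: "'a set set" and B :: "'b set set"
  assumes fin: "finite P" "finite B"
    and V: "V \<noteq> {}" "V' \<in> P" "V \<subseteq> V'" and W: "W \<noteq> {}" "W' \<in> B" "W \<subseteq> W'"
  shows "mobius (times_poset P B) (V \<times> W) (V' \<times> W') = mobius P V V' * mobius B W W'"
proof -
  define g where "g s = mobius P V (fst ` s) * mobius B W (snd ` s)" for s :: "('a \<times> 'b) set"
  have g_times: "g (a \<times> b) = mobius P V a * mobius B W b" if "V \<subseteq> a" "W \<subseteq> b" for a b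
  proof -
    have "a \<noteq> {}" "b \<noteq> {}" using that V(1) W(1) by auto
    then show ?thesis by (simp add: g_def)
  qed
  have mobius_eq_g: "mobius (times_poset P B) (V \<times> W) q = g q"
    if "q \<in> times_poset P B" "V \<times> W \<subseteq> q" for q
  proof (rule mobius_unique[OF finite_times_poset[OF fin] _ _ that])
    show "g (V \<times> W) = 1" by (simp add: g_times)
  next
    fix q assume q: "q \<in> times_poset P B" "V \<times> W \<subset> q"
    then obtain a b where ab: "a \<in> P" "b \<in> B" "q = a \<times> b" unfolding times_poset_def by auto
    then have sub: "V \<subseteq> a" "W \<subseteq> b" and ne: "(V, W) \<noteq> (a, b)"
      using q V W by (auto simp: times_subset_iff)
    let ?IP = "{a'\<in>P. V \<subseteq> a' \<and> a' \<subseteq> a}" and ?IB = "{b'\<in>B. W \<subseteq> b' \<and> b' \<subseteq> b}"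
    have inj: "inj_on (\<lambda>(a, b). a \<times> b) (?IP \<times> ?IB)"
      by (rule inj_on_subset[OF inj_on_times_nonempty]) (use V W in auto)
    have "(\<Sum>s\<in>{s\<in>times_poset P B. V \<times> W \<subseteq> s \<and> s \<subseteq> q}. g s)
            = (\<Sum>(a', b')\<in>?IP \<times> ?IB. mobius P V a' * mobius B W b')"
      unfolding ab(3) times_poset_interval[OF V(1) W(1)] sum.reindex[OF inj]
      by (intro sum.cong refl) (auto simp: g_times)
    also have "\<dots> = (\<Sum>a'\<in>?IP. mobius P V a') * (\<Sum>b'\<in>?IB. mobius B W b')"
      by (simp add: sum_product sum.cartesian_product case_prod_beta)
    also have "\<dots> = 0"
      using mobius_interval_sum[OF fin(1) ab(1) sub(1)] mobius_interval_sum[OF fin(2) ab(2) sub(2)] ne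
      by simp
    finally show "(\<Sum>s\<in>{s\<in>times_poset P B. V \<times> W \<subseteq> s \<and> s \<subseteq> q}. g s) = 0" .
  qed
  have "V' \<times> W' \<in> times_poset P B" using V W unfolding times_poset_def by auto
  then have "mobius (times_poset P B) (V \<times> W) (V' \<times> W') = g (V' \<times> W')"
    using V W by (intro mobius_eq_g) auto
  also have "\<dots> = mobius P V V' * mobius B W W'" using V W by (intro g_times)
  finally show ?thesis .
qed

lemma extreme_points_Times:
  fixes F :: "'a::euclidean_space set" and G :: "'b::euclidean_space set"
  shows "{v. v extreme_point_of (F \<times> G)} = {v. v extreme_point_of F} \<times> {v. v extreme_point_of G}"
proof -
  have "v extreme_point_of (F \<times> G) \<longleftrightarrow> fst v extreme_point_of F \<and> snd v extreme_point_of G" for v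
  proof -
    have "{v} = {fst v} \<times> {snd v}" by (cases v) auto
    then show ?thesis by (metis face_of_singleton face_of_Times_eq insert_not_empty)
  qed
  then show ?thesis by (auto simp: mem_Times_iff)
qed

lemma face_poset_Times:
  fixes K :: "'a::euclidean_space set" and T :: "'b::euclidean_space set"
  shows "face_poset (K \<times> T) = times_poset (face_poset K) (face_poset T)"
proof -
  have faces: "{C. C face_of K \<times> T} = (\<lambda>(F, G). F \<times> G) ` ({F. F face_of K} \<times> {G. G face_of T})"
    by (auto simp: face_of_Times_decomp)
  have "face_poset (K \<times> T) = (\<lambda>C. {v. v extreme_point_of C}) ` {C. C face_of K \<times> T}"
    unfolding face_poset_def by auto
  also have "\<dots> = (\<lambda>(F, G). {v. v extreme_point_of F} \<times> {v. v extreme_point_of G})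
                      ` ({F. F face_of K} \<times> {G. G face_of T})"
    unfolding faces image_image by (simp add: case_prod_beta extreme_points_Times)
  also have "\<dots> = times_poset (face_poset K) (face_poset T)"
    unfolding times_poset_def face_poset_def by auto
  finally show ?thesis .
qed

lemma finite_face_poset:
  fixes K :: "'a::euclidean_space set"
  assumes "polytope K"
  shows "finite (face_poset K)"
proof -
  have "face_poset K = (\<lambda>F. {v. v extreme_point_of F}) ` {F. F face_of K}"
    unfolding face_poset_def by auto
  then show ?thesis using finite_polytope_faces[OF assms] by simp
qed

lemma prism_eq_Times:
  assumes "convex K"
  shows "prism K = K \<times> closed_segment (0::real) 1"
proof -
  have "(\<lambda>x. (x, 0::real)) ` K \<union> (\<lambda>x. (x, 1)) ` K = K \<times> {0, 1}" by auto
  then have "prism K = (convex hull K) \<times> (convex hull {0::real, 1})"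
    unfolding prism_def by (simp add: convex_hull_Times)
  then show ?thesis using assms by (simp add: segment_convex_hull hull_same)
qed

lemma face_poset_unit_segment:
  "face_poset (closed_segment (0::real) 1) = {{}, {0}, {1}, {0, 1}}"
proof
  show "face_poset (closed_segment (0::real) 1) \<subseteq> {{}, {0}, {1}, {0, 1}}"
  proof
    fix x assume "x \<in> face_poset (closed_segment (0::real) 1)"
    then obtain F where "F face_of closed_segment 0 1" "x = {v. v extreme_point_of F}"
      unfolding face_poset_def by auto
    then have "x \<in> Pow {0, 1}"
      using extreme_point_of_face extreme_point_of_segment by blast
    also have "Pow {0::real, 1} = {{}, {0}, {1}, {0, 1}}" by (auto simp: Pow_insert)
    finally show "x \<in> {{}, {0}, {1}, {0, 1}}" .
  qed
next
  have in_poset: "{v. v extreme_point_of F} \<in> face_poset (closed_segment (0::real) 1)"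
    if "F face_of closed_segment 0 1" for F
    using that unfolding face_poset_def by blast
  have vertex: "{a} face_of closed_segment 0 1" if "a = 0 \<or> a = (1::real)" for a
    using that by (auto simp: face_of_singleton extreme_point_of_segment)
  have "{v. v extreme_point_of closed_segment (0::real) 1} = {0, 1}"
    using extreme_point_of_segment by auto
  then show "{{}, {0}, {1}, {0, 1}} \<subseteq> face_poset (closed_segment (0::real) 1)"
    using in_poset[OF empty_face_of] in_poset[OF vertex] in_poset[OF face_of_refl[OF convex_closed_segment]]
    by auto
qed

(* Affine dimension is additive under products of nonempty sets: after translating
   both factors to contain the origin, the span of a product is the product of spans. *)
lemma span_Times_zero:
  fixes A :: "'a::euclidean_space set" and B :: "'b::euclidean_space set"
  assumes "0 \<in> A" "0 \<in> B"
  shows "span (A \<times> B) = span A \<times> span B"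
proof
  show "span (A \<times> B) \<subseteq> span A \<times> span B"
    by (intro span_minimal subspace_Times subspace_span) (auto intro: span_base)
next
  have left: "(x, 0) \<in> span (A \<times> B)" if "x \<in> span A" for x
  proof -
    have "linear (\<lambda>x::'a. (x, 0::'b))" by (simp add: linear_iff)
    then have "(\<lambda>x. (x, 0::'b)) ` span A = span ((\<lambda>x. (x, 0::'b)) ` A)" by (rule span_linear_image[symmetric])
    also have "\<dots> \<subseteq> span (A \<times> B)" using assms by (intro span_mono) auto
    finally show ?thesis using that by auto
  qed
  have right: "(0, y) \<in> span (A \<times> B)" if "y \<in> span B" for y
  proof -
    have "linear (\<lambda>y::'b. (0::'a, y))" by (simp add: linear_iff)
    then have "(\<lambda>y. (0::'a, y)) ` span B = span ((\<lambda>y. (0::'a, y)) ` B)" by (rule span_linear_image[symmetric])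
    also have "\<dots> \<subseteq> span (A \<times> B)" using assms by (intro span_mono) auto
    finally show ?thesis using that by auto
  qed
  show "span A \<times> span B \<subseteq> span (A \<times> B)"
  proof clarify
    fix x y assume "x \<in> span A" "y \<in> span B"
    then have "(x, 0) + (0, y) \<in> span (A \<times> B)" by (intro span_add left right)
    then show "(x, y) \<in> span (A \<times> B)" by simp
  qed
qed

lemma aff_dim_Times:
  fixes V :: "'a::euclidean_space set" and W :: "'b::euclidean_space set"
  assumes "a \<in> V" "b \<in> W"
  shows "aff_dim (V \<times> W) = aff_dim V + aff_dim W"
proof -
  define A where "A = (+) (- a) ` V"
  define B where "B = (+) (- b) ` W"
  have shift: "(+) (- (a, b)) ` (V \<times> W) = A \<times> B"
    unfolding A_def B_def by (auto simp: image_iff)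
  have zero: "0 \<in> A" "0 \<in> B" using assms unfolding A_def B_def by force+
  have "aff_dim (V \<times> W) = int (dim ((+) (- (a, b)) ` (V \<times> W)))"
    by (rule aff_dim_eq_dim) (simp add: hull_inc assms)
  also have "\<dots> = int (dim (A \<times> B))" unfolding shift ..
  also have "dim (A \<times> B) = dim (span A \<times> span B)"
    using zero by (metis dim_span span_Times_zero)
  also have "\<dots> = dim A + dim B" by (simp add: dim_Times dim_span)
  finally show ?thesis
    using aff_dim_eq_dim[of a V] aff_dim_eq_dim[of b W] assms by (simp add: hull_inc A_def B_def)
qed

(* The pairs p \<le> q with p nonempty, and the part of the Moebius polynomial they
   contribute; it equals M_P - g_{-1}, since the empty set is the only element of
   rank -1. *)
definition nonempty_intervals :: "'a set set \<Rightarrow> ('a set \<times> 'a set) set" where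
  "nonempty_intervals P = {(p, q). p \<in> P \<and> q \<in> P \<and> p \<subseteq> q \<and> p \<noteq> {}}"

definition nonempty_mobius_poly :: "'a::euclidean_space set set \<Rightarrow> int poly" where
  "nonempty_mobius_poly P =
     (\<Sum>(p, q)\<in>nonempty_intervals P. monom (mobius P p q) (nat (face_rank q - face_rank p)))"

lemma face_rank_le_minus_one_iff: "face_rank S \<le> -1 \<longleftrightarrow> S = {}"
  unfolding face_rank_def using aff_dim_geq[of S] aff_dim_empty[of S] by linarith

lemma mobius_poly_split:
  fixes P :: "'a::euclidean_space set set"
  assumes "finite P"
  shows "mobius_poly P face_rank = bottom_poly P face_rank + nonempty_mobius_poly P"
proof -
  let ?term = "\<lambda>(p, q). monom (mobius P p q) (nat (face_rank q - face_rank p))"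
  let ?bottom = "{(p, q). p \<in> P \<and> q \<in> P \<and> p \<subseteq> q \<and> face_rank p \<le> -1 \<and> -1 \<le> face_rank q}"
  let ?upper = "nonempty_intervals P"
  have all: "{(p, q). p \<in> P \<and> q \<in> P \<and> p \<subseteq> q} = ?bottom \<union> ?upper"
    using face_rank_le_minus_one_iff aff_dim_geq unfolding face_rank_def nonempty_intervals_def by auto
  have "finite ?bottom" "finite ?upper"
    by (rule finite_subset[of _ "P \<times> P"]; use assms in \<open>auto simp: nonempty_intervals_def\<close>)+
  moreover have "?bottom \<inter> ?upper = {}"
    using face_rank_le_minus_one_iff by (auto simp: nonempty_intervals_def)
  ultimately have "sum ?term (?bottom \<union> ?upper) = sum ?term ?bottom + sum ?term ?upper"
    by (rule sum.union_disjoint)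
  then show ?thesis unfolding mobius_poly_def bottom_poly_def nonempty_mobius_poly_def all .
qed

definition times_interval :: "('a set \<times> 'a set) \<times> ('b set \<times> 'b set) \<Rightarrow> ('a \<times> 'b) set \<times> ('a \<times> 'b) set" where
  "times_interval = (\<lambda>((V, V'), (W, W')). (V \<times> W, V' \<times> W'))"

lemma nonempty_intervals_times_poset:
  "nonempty_intervals (times_poset P B) =
     times_interval ` (nonempty_intervals P \<times> nonempty_intervals B)"
proof
  show "nonempty_intervals (times_poset P B) \<subseteq>
          times_interval ` (nonempty_intervals P \<times> nonempty_intervals B)"
  proof clarify
    fix p q assume "(p, q) \<in> nonempty_intervals (times_poset P B)"
    then obtain V W V' W' where VW: "V \<in> P" "W \<in> B" "p = V \<times> W" "V' \<in> P" "W' \<in> B" "q = V' \<times> W'"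
      and pq: "p \<subseteq> q" "p \<noteq> {}"
      unfolding nonempty_intervals_def times_poset_def by auto
    then have "((V, V'), (W, W')) \<in> nonempty_intervals P \<times> nonempty_intervals B"
      unfolding nonempty_intervals_def by (auto simp: times_subset_iff)
    moreover have "(p, q) = times_interval ((V, V'), (W, W'))"
      using VW by (simp add: times_interval_def)
    ultimately show "(p, q) \<in> times_interval ` (nonempty_intervals P \<times> nonempty_intervals B)" by blast
  qed
qed (auto simp: nonempty_intervals_def times_interval_def times_poset_def)

lemma inj_on_times_interval:
  "inj_on times_interval (nonempty_intervals P \<times> nonempty_intervals B)"
  by (rule inj_onI) (auto simp: nonempty_intervals_def times_interval_def times_eq_iff)

lemma nonempty_mobius_poly_times_poset:
  fixes P :: "'a::euclidean_space set set" and B :: "'b::euclidean_space set set"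
  assumes fin: "finite P" "finite B"
  shows "nonempty_mobius_poly (times_poset P B) = nonempty_mobius_poly P * nonempty_mobius_poly B"
proof -
  let ?term = "\<lambda>Q (p, q). monom (mobius Q p q) (nat (face_rank q - face_rank p))"
  have factor: "?term (times_poset P B) (times_interval ((V, V'), (W, W'))) = ?term P (V, V') * ?term B (W, W')"
    if "((V, V'), (W, W')) \<in> nonempty_intervals P \<times> nonempty_intervals B" for V V' W W'
  proof -
    from that have V: "V \<noteq> {}" "V' \<in> P" "V \<subseteq> V'" and W: "W \<noteq> {}" "W' \<in> B" "W \<subseteq> W'"
      unfolding nonempty_intervals_def by auto
    then have rank: "face_rank (V \<times> W) = face_rank V + face_rank W"
      "face_rank (V' \<times> W') = face_rank V' + face_rank W'"
      unfolding face_rank_def by (auto intro: aff_dim_Times)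
    moreover have "face_rank V \<le> face_rank V'" "face_rank W \<le> face_rank W'"
      unfolding face_rank_def using V W by (auto intro: aff_dim_subset)
    ultimately have "nat (face_rank (V' \<times> W') - face_rank (V \<times> W)) =
        nat (face_rank V' - face_rank V) + nat (face_rank W' - face_rank W)"
      by simp
    then show ?thesis
      by (simp add: times_interval_def mobius_times_poset[OF fin V W] mult_monom)
  qed
  have "nonempty_mobius_poly (times_poset P B) =
          (\<Sum>z\<in>nonempty_intervals P \<times> nonempty_intervals B. ?term (times_poset P B) (times_interval z))"
    unfolding nonempty_mobius_poly_def nonempty_intervals_times_poset
    by (rule sum.reindex[OF inj_on_times_interval, unfolded comp_def])
  also have "\<dots> = (\<Sum>z\<in>nonempty_intervals P \<times> nonempty_intervals B. ?term P (fst z) * ?term B (snd z))"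
    by (intro sum.cong refl) (use factor in auto)
  also have "\<dots> = nonempty_mobius_poly P * nonempty_mobius_poly B"
    unfolding nonempty_mobius_poly_def
    by (simp add: sum_product sum.cartesian_product case_prod_beta)
  finally show ?thesis .
qed

(* For the unit segment: three trivial intervals and two covers {0},{1} < {0,1}. *)
lemma nonempty_mobius_poly_unit_segment:
  "nonempty_mobius_poly {{}, {0::real}, {1}, {0, 1}} = [:3, -2:]"
proof -
  let ?S = "{{}, {0::real}, {1}, {0, 1}}"
  have intervals: "nonempty_intervals ?S = {({0}, {0}), ({1}, {1}), ({0, 1}, {0, 1}), ({0}, {0, 1}), ({1}, {0, 1})}"
    unfolding nonempty_intervals_def by auto
  have "mobius ?S {0} {0, 1} = -1" "mobius ?S {1} {0, 1} = -1"
    by (rule mobius_cover; simp; blast)+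
  moreover have "face_rank {a::real} = 0" "face_rank {0::real, 1} = 1" for a
    by (simp_all add: face_rank_def)
  ultimately show ?thesis
    unfolding nonempty_mobius_poly_def intervals by (simp add: monom_0 monom_Suc)
qed

theorem mainTheorem7:
  fixes K :: "'a::euclidean_space set"
  assumes "polytope K"
  shows "mobius_poly (face_poset (prism K)) face_rank =
           [:3, -2:] * (mobius_poly (face_poset K) face_rank - bottom_poly (face_poset K) face_rank)
           + bottom_poly (face_poset (prism K)) face_rank"
proof -
  let ?P = "face_poset K" and ?S = "face_poset (closed_segment (0::real) 1)"
  have "polytope (closed_segment (0::real) 1)"
    by (simp add: segment_convex_hull polytope_convex_hull)
  then have finite: "finite ?P" "finite ?S"
    using assms finite_face_poset by blast+
  have prism: "face_poset (prism K) = times_poset ?P ?S"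
    using assms by (simp add: prism_eq_Times polytope_imp_convex face_poset_Times)
  have "nonempty_mobius_poly (face_poset (prism K)) = nonempty_mobius_poly ?P * [:3, -2:]"
    unfolding prism nonempty_mobius_poly_times_poset[OF finite]
    by (simp add: face_poset_unit_segment nonempty_mobius_poly_unit_segment)
  moreover have "finite (face_poset (prism K))"
    unfolding prism using finite by (rule finite_times_poset)
  ultimately show ?thesis
    using mobius_poly_split[OF finite(1)] mobius_poly_split[of "face_poset (prism K)"]
    by (simp add: algebra_simps)
qed

end
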